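(* Fix $\theta\in\mathcal B_0$ and a moment order $k\in[L]$, and suppose that, on an event of probability at least $1-\zeta$, the inlier stability condition holds for the cloud $\{\check g^{(k)}_n(\theta)\}_{n=1}^N$ with mean $\mu^{(k)}_g(\theta)$, covariance $\Sigma^{(k)}_g(\theta)$ and constants $\delta_{\mu,k}(\zeta),\delta_{\Sigma,k}(\zeta)$. Let $\hat w^{(k)}(\theta)=\bar w^{[s]}\in\Delta_{N,\epsilon}$ be the weight vector output by the outer-loop procedure at a terminating iteration $s$ with center $\hat\mu^{[s]}$. Then, on that event, $$\Big\|\sum_{n=1}^N\hat w^{(k)}_n(\theta)\check g^{(k)}_n(\theta)-\mu^{(k)}_g(\theta)\Big\|_2\le\delta_{\mu,k}(\zeta)+\alpha_\epsilon\sqrt{C_k},\qquad\alpha_\epsilon=\sqrt{\tfrac{\epsilon}{1-2\epsilon}},$$ where either (a) $C_k=C_{stop,k}$ is the stopping threshold that the terminating certificate satisfies, $\gamma(\bar w^{[s]};\hat\mu^{[s]})\le C_{stop,k}$; or (b) the certificate is produced by the MW–MMW rounds, so that $\gamma(\bar w^{[s]};\hat\mu^{[s]})\le\mathrm{OPT}(\hat\mu^{[s]})+\delta_{T,k}$, the error satisfies $\|\hat\mu^{[s]}-\mu^{(k)}_g(\theta)\|_2\le R_k$, and $$C_k=\sup_{\theta'\in\mathcal B_0}\|\Sigma^{(k)}_g(\theta')\|_{op}+\delta_{\Sigma,k}(\zeta)+(\delta_{\mu,k}(\zeta)+R_k)^2+\delta_{T,k},\quad \delta_{T,k}\le4\nu_k\Big(\sqrt{\tfrac{\log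 p}{T}}+\sqrt{\tfrac{\log(1/(1-\epsilon))}{T}}\Big),$$ with $\nu_k=\max_{i,j}\|\check g^{(k)}_i(\theta)-\check g^{(k)}_j(\theta)\|_2^2$.
   Context: Fix $\epsilon\in[0,1/3)$, $\zeta\in(0,1)$, a parameter set $\Theta\subseteq\mathbb R^p$ and a ball $\mathcal B_0\subseteq\Theta$. For each moment order $k\in[L]$ and $\theta$, $\check g^{(k)}_1(\theta),\dots,\check g^{(k)}_N(\theta)\in\mathbb R^p$ are (contaminated) per-observation gradients. For an index set $I$ and $\epsilon'\in[0,1)$, $\Delta_{I,\epsilon'}=\{w\in\mathbb R^I:\sum_{n\in I}w_n=1,0\le w_n\le\frac1{(1-\epsilon')|I|}\}$, $\Delta_{N,\epsilon}=\Delta_{[N],\epsilon}$. For vectors $g_1,\dots,g_N$ and a center $\hat\mu$: $S(w;\hat\mu)=\sum_nw_n(g_n-\hat\mu)(g_n-\hat\mu)^\top$, $\gamma(w;\hat\mu)=\|S(w;\hat\mu)\|_{op}$, $\mathrm{OPT}(\hat\mu)=\min_{w\in\Delta_{N,\epsilon}}\max_{\rho\succeq0,\mathrm{Tr}\rho=1}\mathrm{Tr}(S(w;\hat\mu)\rho)$. Inlier stability condition for a cloud $g_1,\dots,g_N$ with mean $\mu_g$, PSD $\Sigma_g$, constants $\delta_\mu,\delta_\Sigma$: there is a partition $[N]=I_{in}\sqcup I_{out}$ with $|I_{out}|\le\epsilon N$ such that for all $w\in\Delta_{I_{in},\epsilon/(1-\epsilon)}$, $\|\sum_{n\in I_{in}}w_n(g_n-\mu_g)\|_2\le\delta_\mu$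 and $\sum_{n\in I_{in}}w_n(g_n-\mu_g)(g_n-\mu_g)^\top\preceq\Sigma_g+\delta_\Sigma I$. Outer-loop procedure (spectral gradient reweighting): start from a center $\hat\mu^{[1]}$ in the convex hull of the cloud; at iteration $s$ compute weights $\bar w^{[s]}\in\Delta_{N,\epsilon}$ (via multiplicative-weights / matrix-multiplicative-weights rounds with $T$ inner iterations) for the fixed center $\hat\mu^{[s]}$; stop if $\gamma(\bar w^{[s]};\hat\mu^{[s]})\le C_{stop,k}$, otherwise set $\hat\mu^{[s+1]}=\sum_n\bar w^{[s]}_ng_n$. *)

theory Defs
  imports "HOL-Analysis.Analysis"
begin

text \<open>Vectors in R^p are real^'p (p = CARD('p)); p x p matrices are real^'p^'p.
  Observations are indexed by [N] = {1..N}.\<close>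

definition outer :: "real^'p \<Rightarrow> real^'p \<Rightarrow> real^'p^'p" where
  "outer x y = (\<chi> i j. x$i * y$j)"

definition op_norm :: "real^'p^'p \<Rightarrow> real" where
  "op_norm A = onorm (\<lambda>x. A *v x)"

definition psd :: "real^'p^'p \<Rightarrow> bool" where
  "psd A \<longleftrightarrow> transpose A = A \<and> (\<forall>x. 0 \<le> x \<bullet> (A *v x))"

definition loewner_le :: "real^'p^'p \<Rightarrow> real^'p^'p \<Rightarrow> bool" where
  "loewner_le A B \<longleftrightarrow> psd (B - A)"

definition capped_simplex :: "nat set \<Rightarrow> real \<Rightarrow> (nat \<Rightarrow> real) set" where
  "capped_simplex I e =
     {w. (\<forall>n\<in>I. 0 \<le> w n \<and> w n \<le> 1 / ((1 - e) * real (card I))) \<and> (\<Sum>n\<in>I. w n) = 1}"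

definition Smat :: "nat \<Rightarrow> (nat \<Rightarrow> real^'p) \<Rightarrow> (nat \<Rightarrow> real) \<Rightarrow> real^'p \<Rightarrow> real^'p^'p" where
  "Smat N g w mu = (\<Sum>n\<in>{1..N}. w n *\<^sub>R outer (g n - mu) (g n - mu))"

definition gamma :: "nat \<Rightarrow> (nat \<Rightarrow> real^'p) \<Rightarrow> (nat \<Rightarrow> real) \<Rightarrow> real^'p \<Rightarrow> real" where
  "gamma N g w mu = op_norm (Smat N g w mu)"

definition OPT :: "nat \<Rightarrow> real \<Rightarrow> (nat \<Rightarrow> real^'p) \<Rightarrow> real^'p \<Rightarrow> real" where
  "OPT N eps g mu =
     Inf ((\<lambda>w. Sup ((\<lambda>\<rho>. trace (Smat N g w mu ** \<rho>)) ` {\<rho>. psd \<rho> \<and> trace \<rho> = 1}))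
          ` capped_simplex {1..N} eps)"

definition inlier_stable ::
  "nat \<Rightarrow> real \<Rightarrow> (nat \<Rightarrow> real^'p) \<Rightarrow> real^'p \<Rightarrow> real^'p^'p \<Rightarrow> real \<Rightarrow> real \<Rightarrow> bool" where
  "inlier_stable N eps g mu_g Sigma_g d_mu d_Sigma \<longleftrightarrow>
     (\<exists>Iin Iout. Iin \<union> Iout = {1..N} \<and> Iin \<inter> Iout = {} \<and> real (card Iout) \<le> eps * real N \<and>
        (\<forall>w\<in>capped_simplex Iin (eps / (1 - eps)).
           norm (\<Sum>n\<in>Iin. w n *\<^sub>R (g n - mu_g)) \<le> d_mu \<and>
           loewner_le (\<Sum>n\<in>Iin. w n *\<^sub>R outer (g n - mu_g) (g n - mu_g))
                      (Sigma_g + d_Sigma *\<^sub>R mat 1)))"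

end

theory Submission
  imports Defs
begin

(* Let a be the mass that w puts on the outliers. The cap 1/((1-eps)N) forces a <= eps/(1-eps), so
   w restricted to the inliers and renormalised is admissible in the stability condition, and its mean
   is d_mu-close to mu_g. The mean of w differs from this inlier mean by at most sqrt (a/(1-a) gamma):
   along the direction of the difference, inliers and outliers balance each other about the w-mean, and
   Cauchy-Schwarz on both groups bounds the imbalance by the w-variance, which is at most the second
   moment gamma about any center.
   In case (b), OPT is at most its value at the uniform weights on the inliers, whose second moment about
   a center within R of mu_g is at most ||Sigma_g|| + d_Sigma + (d_mu + R)^2; the inner maximum over
   density matrices is controlled by writing them as sums of rank-one terms. *)

lemma outer_mult_vector: "outer x y *v v = (y \<bullet> v) *\<^sub>R x"
  by (simp add: vec_eq_iff matrix_vector_mult_def outer_def inner_vec_def sum_distrib_left mult_ac)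

lemma inner_outer_self: "v \<bullet> (outer x x *v v) = (x \<bullet> v)\<^sup>2"
  by (simp add: outer_mult_vector power2_eq_square inner_commute)

lemma sum_matrix_vector_mult: "(\<Sum>n\<in>A. f n) *v (v::real^'p) = (\<Sum>n\<in>A. f n *v v)"
  by (simp add: vec_eq_iff matrix_vector_mult_def sum_component sum_distrib_right sum.swap[of _ A])

lemma inner_sum_outer: "v \<bullet> ((\<Sum>n\<in>A. c n *\<^sub>R outer (x n) (x n)) *v v) = (\<Sum>n\<in>A. c n * (x n \<bullet> v)\<^sup>2)"
  by (simp add: sum_matrix_vector_mult scaleR_matrix_vector_assoc[symmetric] inner_sum_right
      inner_outer_self)

lemma inner_Smat: "v \<bullet> (Smat N g w c *v v) = (\<Sum>n\<in>{1..N}. w n * (v \<bullet> (g n - c))\<^sup>2)"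
  unfolding Smat_def inner_sum_outer by (simp add: inner_commute)

lemma inner_le_op_norm: "v \<bullet> (A *v v) \<le> op_norm A * (norm v)\<^sup>2"
proof -
  have "v \<bullet> (A *v v) \<le> norm v * norm (A *v v)"
    by (rule Cauchy_Schwarz_ineq2[THEN abs_le_D1])
  also have "\<dots> \<le> norm v * (op_norm A * norm v)"
    unfolding op_norm_def by (rule mult_left_mono[OF onorm]) auto
  finally show ?thesis by (simp add: power2_eq_square mult_ac)
qed

lemma psd_entry_sym: "psd A \<Longrightarrow> A $ i $ j = A $ j $ i"
  unfolding psd_def by (metis transpose_def vec_lambda_beta)

lemma psd_form_sym:
  assumes "psd A"
  shows "x \<bullet> (A *v y) = y \<bullet> (A *v x)"
proof -
  have "x \<bullet> (A *v y) = (x v* A) \<bullet> y" by (simp add: dot_lmul_matrix)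
  also have "x v* A = transpose A *v x" by simp
  also have "transpose A = A" using assms by (simp add: psd_def)
  finally show ?thesis by (metis inner_commute)
qed

lemma psd_Cauchy_Schwarz:
  assumes "psd A"
  shows "(x \<bullet> (A *v y))\<^sup>2 \<le> (x \<bullet> (A *v x)) * (y \<bullet> (A *v y))"
proof -
  define X Y b where "X = x \<bullet> (A *v x)" and "Y = y \<bullet> (A *v y)" and "b = x \<bullet> (A *v y)"
  have form: "0 \<le> s\<^sup>2 * X - 2 * s * t * b + t\<^sup>2 * Y" for s t
  proof -
    have "0 \<le> (s *\<^sub>R x - t *\<^sub>R y) \<bullet> (A *v (s *\<^sub>R x - t *\<^sub>R y))"
      using assms by (simp add: psd_def)
    also have "\<dots> = s\<^sup>2 * X - 2 * s * t * b + t\<^sup>2 * Y"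
      using psd_form_sym[OF assms, of x y]
      by (simp add: X_def Y_def b_def matrix_vector_mult_diff_distrib matrix_vector_mult_scaleR
          inner_diff_left inner_diff_right power2_eq_square algebra_simps)
    finally show ?thesis .
  qed
  have "X \<ge> 0" "Y \<ge> 0" using assms by (simp_all add: psd_def X_def Y_def)
  moreover have "Y * (X * Y - b\<^sup>2) \<ge> 0" using form[of Y b]
    by (simp add: power2_eq_square algebra_simps)
  moreover have "X * (X * Y - b\<^sup>2) \<ge> 0" using form[of b X]
    by (simp add: power2_eq_square algebra_simps)
  moreover have "X = 0 \<Longrightarrow> Y = 0 \<Longrightarrow> b = 0" using form[of 1 b] by (auto simp: mult_le_0_iff)
  ultimately have "b\<^sup>2 \<le> X * Y"
    by (cases "X = 0"; cases "Y = 0") (auto simp: zero_le_mult_iff mult_le_0_iff)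
  then show ?thesis by (simp add: X_def Y_def b_def)
qed

lemma psd_entry_Cauchy_Schwarz:
  assumes "psd A"
  shows "(A $ i $ j)\<^sup>2 \<le> A $ i $ i * A $ j $ j"
  using psd_Cauchy_Schwarz[OF assms, of "axis i 1" "axis j 1"]
  by (simp add: inner_axis' matrix_vector_mult_basis column_def)

(* One Cholesky elimination step at pivot i. For a zero pivot, 1 / sqrt 0 = 0 makes r = 0, which is
   harmless because Cauchy-Schwarz then forces row i to vanish already. *)
lemma psd_pivot:
  fixes A :: "real^'p^'p" and i :: 'p
  assumes A: "psd A"
  defines "r \<equiv> (1 / sqrt (A $ i $ i)) *\<^sub>R column i A"
  shows psd_minus_pivot: "psd (A - outer r r)"
    and row_minus_pivot: "(A - outer r r) $ i $ k = 0"
    and outer_pivot_entry: "outer r r $ j $ k = A $ j $ i * A $ k $ i / A $ i $ i"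
proof -
  have "0 \<le> axis i 1 \<bullet> (A *v axis i 1)" using A by (simp add: psd_def)
  then have diag: "0 \<le> A $ i $ i"
    by (simp add: inner_axis' matrix_vector_mult_basis column_def)
  show entry: "outer r r $ j $ k = A $ j $ i * A $ k $ i / A $ i $ i" for j k
    using diag by (simp add: r_def outer_def column_def real_sqrt_mult[symmetric])
  show "(A - outer r r) $ i $ k = 0"
  proof (cases "A $ i $ i = 0")
    case True
    then show ?thesis using psd_entry_Cauchy_Schwarz[OF A, of i k] entry by simp
  next
    case False
    then show ?thesis using entry psd_entry_sym[OF A, of i k] by simp
  qed
  have "x \<bullet> (outer r r *v x) \<le> x \<bullet> (A *v x)" for x
  proof -
    have col: "column i A \<bullet> x = x \<bullet> (A *v axis i 1)"
      by (simp add: matrix_vector_mult_basis inner_commute)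
    have "x \<bullet> (outer r r *v x) = (x \<bullet> (A *v axis i 1))\<^sup>2 / A $ i $ i"
      using diag by (simp add: inner_outer_self r_def col power_mult_distrib power_divide)
    also have "\<dots> \<le> x \<bullet> (A *v x)"
      using psd_Cauchy_Schwarz[OF A, of x "axis i 1"] diag A[unfolded psd_def]
      by (cases "A $ i $ i = 0")
         (auto simp: inner_axis' matrix_vector_mult_basis column_def divide_le_eq)
    finally show ?thesis .
  qed
  moreover have "transpose (outer r r) = outer r r"
    by (simp add: vec_eq_iff transpose_def outer_def mult.commute)
  ultimately show "psd (A - outer r r)"
    using A by (simp add: psd_def matrix_vector_mult_diff_rdistrib inner_diff_right)
      (simp add: vec_eq_iff transpose_def)
qed

lemma psd_sum_outer_on:
  fixes A :: "real^'p^'p"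
  assumes "finite S" "psd A" "\<forall>j k. j \<notin> S \<longrightarrow> A $ j $ k = 0"
  shows "\<exists>r. A = (\<Sum>i\<in>S. outer (r i) (r i))"
  using assms
proof (induction S arbitrary: A rule: finite_induct)
  case empty
  then show ?case by (simp add: vec_eq_iff)
next
  case (insert i S)
  define p where "p = (1 / sqrt (A $ i $ i)) *\<^sub>R column i A"
  have "\<forall>j k. j \<notin> S \<longrightarrow> (A - outer p p) $ j $ k = 0"
  proof (intro allI impI)
    fix j k assume "j \<notin> S"
    show "(A - outer p p) $ j $ k = 0"
    proof (cases "j = i")
      case True
      show ?thesis unfolding True p_def by (rule row_minus_pivot[OF insert.prems(1)])
    next
      case False
      with \<open>j \<notin> S\<close> have "A $ j $ k = 0" "A $ j $ i = 0" using insert.prems(2) by auto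
      moreover have "(A - outer p p) $ j $ k = A $ j $ k - A $ j $ i * A $ k $ i / A $ i $ i"
        unfolding p_def by (simp only: vector_minus_component outer_pivot_entry[OF insert.prems(1)])
      ultimately show ?thesis by simp
    qed
  qed
  then obtain r where r: "A - outer p p = (\<Sum>j\<in>S. outer (r j) (r j))"
    using insert.IH psd_minus_pivot[OF insert.prems(1)] unfolding p_def by blast
  have "(\<Sum>j\<in>S. outer ((r(i := p)) j) ((r(i := p)) j)) = (\<Sum>j\<in>S. outer (r j) (r j))"
    using insert.hyps by (intro sum.cong) auto
  then have "A = (\<Sum>j\<in>insert i S. outer ((r(i := p)) j) ((r(i := p)) j))"
    using insert.hyps r by (simp add: algebra_simps)
  then show ?case by blast
qed

lemma psd_sum_outer:
  fixes A :: "real^'p^'p"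
  assumes "psd A"
  obtains r :: "'p \<Rightarrow> real^'p" where "A = (\<Sum>i\<in>UNIV. outer (r i) (r i))"
proof -
  have "\<exists>r :: 'p \<Rightarrow> real^'p. A = (\<Sum>i\<in>UNIV. outer (r i) (r i))"
    using assms by (intro psd_sum_outer_on) auto
  then show ?thesis using that by blast
qed

lemma trace_mult_sum: "trace (M ** sum f A) = (\<Sum>a\<in>A. trace (M ** f a))"
  by (simp add: trace_def matrix_matrix_mult_def sum_component sum_distrib_left sum.swap[of _ A])

lemma trace_mult_outer: "trace (M ** outer r r) = r \<bullet> (M *v r)"
  by (simp add: trace_def matrix_matrix_mult_def outer_def inner_vec_def matrix_vector_mult_def
      sum_distrib_left mult_ac)

lemma trace_mult_psd_nonneg:
  fixes M :: "real^'p^'p"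
  assumes "\<And>v. 0 \<le> v \<bullet> (M *v v)" "psd \<rho>"
  shows "0 \<le> trace (M ** \<rho>)"
proof -
  obtain r :: "'p \<Rightarrow> real^'p" where "\<rho> = (\<Sum>i\<in>UNIV. outer (r i) (r i))" using psd_sum_outer[OF assms(2)] .
  then show ?thesis using assms(1) by (simp add: trace_mult_sum trace_mult_outer sum_nonneg)
qed

lemma trace_mult_density_le:
  fixes S :: "real^'p^'p"
  assumes "\<And>v. v \<bullet> (S *v v) \<le> l * (norm v)\<^sup>2" "psd \<rho>" "trace \<rho> = 1"
  shows "trace (S ** \<rho>) \<le> l"
proof -
  have "0 \<le> trace ((l *\<^sub>R mat 1 - S) ** \<rho>)"
    using assms(1,2) by (intro trace_mult_psd_nonneg)
      (auto simp: matrix_vector_mult_diff_rdistrib inner_diff_right power2_norm_eq_inner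
        scaleR_matrix_vector_assoc[symmetric])
  also have "(l *\<^sub>R mat 1 - S) ** \<rho> = l *\<^sub>R \<rho> - S ** \<rho>"
    by (simp add: vec_eq_iff matrix_matrix_mult_def sum_subtractf algebra_simps
        scalar_matrix_assoc[symmetric])
       (simp add: matrix_matrix_mult_def mat_def if_distrib sum.delta cong: if_cong)
  also have "trace (l *\<^sub>R \<rho> - S ** \<rho>) = l * trace \<rho> - trace (S ** \<rho>)"
    by (simp add: trace_sub trace_def sum_distrib_left sum_subtractf)
  finally show ?thesis using assms(3) by simp
qed

lemma psd_outer_self: "psd (outer x x)"
  unfolding psd_def inner_outer_self by (simp add: vec_eq_iff transpose_def outer_def mult.commute)

lemma trace_outer_axis: "trace (outer (axis i 1) (axis i (1::real))) = 1"
  by (simp add: trace_def outer_def axis_def if_distrib[where f="\<lambda>x. x * _"] sum.delta cong: if_cong)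

lemma density_matrix_exists: "\<exists>\<rho>::real^'p^'p. psd \<rho> \<and> trace \<rho> = 1"
  using psd_outer_self trace_outer_axis by blast

lemma Sup_trace_density_le:
  fixes S :: "real^'p^'p"
  assumes "\<And>v. v \<bullet> (S *v v) \<le> l * (norm v)\<^sup>2"
  shows "Sup ((\<lambda>\<rho>. trace (S ** \<rho>)) ` {\<rho>. psd \<rho> \<and> trace \<rho> = 1}) \<le> l"
  using density_matrix_exists assms by (intro cSup_least) (auto intro: trace_mult_density_le)

lemma Sup_trace_density_nonneg:
  fixes S :: "real^'p^'p"
  assumes "\<And>v. 0 \<le> v \<bullet> (S *v v)"
  shows "0 \<le> Sup ((\<lambda>\<rho>. trace (S ** \<rho>)) ` {\<rho>. psd \<rho> \<and> trace \<rho> = 1})"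
proof -
  obtain \<rho> :: "real^'p^'p" where \<rho>: "psd \<rho>" "trace \<rho> = 1" using density_matrix_exists by blast
  have "bdd_above ((\<lambda>\<rho>. trace (S ** \<rho>)) ` {\<rho>. psd \<rho> \<and> trace \<rho> = 1})"
    using inner_le_op_norm by (intro bdd_aboveI2[where M = "op_norm S"] trace_mult_density_le) auto
  then have "trace (S ** \<rho>) \<le> Sup ((\<lambda>\<rho>. trace (S ** \<rho>)) ` {\<rho>. psd \<rho> \<and> trace \<rho> = 1})"
    using \<rho> by (intro cSUP_upper) auto
  moreover have "0 \<le> trace (S ** \<rho>)" using assms \<rho> by (intro trace_mult_psd_nonneg)
  ultimately show ?thesis by linarith
qed

lemma OPT_le_Sup_trace:
  assumes "w \<in> capped_simplex {1..N} eps"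
  shows "OPT N eps g c \<le> Sup ((\<lambda>\<rho>. trace (Smat N g w c ** \<rho>)) ` {\<rho>. psd \<rho> \<and> trace \<rho> = 1})"
  unfolding OPT_def
proof (rule cInf_lower)
  have "0 \<le> v \<bullet> (Smat N g w' c *v v)" if "w' \<in> capped_simplex {1..N} eps" for w' v
    using that unfolding inner_Smat capped_simplex_def by (intro sum_nonneg) auto
  then show "bdd_below ((\<lambda>w. Sup ((\<lambda>\<rho>. trace (Smat N g w c ** \<rho>)) ` {\<rho>. psd \<rho> \<and> trace \<rho> = 1}))
      ` capped_simplex {1..N} eps)"
    by (intro bdd_belowI2[where m = 0] Sup_trace_density_nonneg)
qed (use assms in blast)

lemma weighted_Cauchy_Schwarz:
  fixes c y :: "'a \<Rightarrow> real"
  assumes "\<And>n. n \<in> I \<Longrightarrow> 0 \<le> c n"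
  shows "(\<Sum>n\<in>I. c n * y n)\<^sup>2 \<le> (\<Sum>n\<in>I. c n) * (\<Sum>n\<in>I. c n * (y n)\<^sup>2)"
proof -
  have "(\<Sum>n\<in>I. sqrt (c n) * (sqrt (c n) * y n))\<^sup>2
      \<le> (\<Sum>n\<in>I. (sqrt (c n))\<^sup>2) * (\<Sum>n\<in>I. (sqrt (c n) * y n)\<^sup>2)"
    by (rule Cauchy_Schwarz_ineq_sum)
  also have "\<dots> = (\<Sum>n\<in>I. c n) * (\<Sum>n\<in>I. c n * (y n)\<^sup>2)"
    using assms by (simp add: power_mult_distrib)
  also have "(\<Sum>n\<in>I. sqrt (c n) * (sqrt (c n) * y n)) = (\<Sum>n\<in>I. c n * y n)"
    using assms by (intro sum.cong) (auto simp: mult.assoc[symmetric])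
  finally show ?thesis .
qed

lemma centered_partial_sum_sq_le:
  fixes w y :: "'a \<Rightarrow> real"
  assumes "finite A" "I \<subseteq> A" "\<And>n. n \<in> A \<Longrightarrow> 0 \<le> w n" "(\<Sum>n\<in>A. w n * y n) = 0"
  shows "(\<Sum>n\<in>A. w n) * (\<Sum>n\<in>I. w n * y n)\<^sup>2
    \<le> (\<Sum>n\<in>I. w n) * (\<Sum>n\<in>A - I. w n) * (\<Sum>n\<in>A. w n * (y n)\<^sup>2)"
proof -
  have split: "sum f A = sum f I + sum f (A - I)" for f :: "'a \<Rightarrow> real"
    using sum.subset_diff[OF assms(2,1)] by (simp add: add.commute)
  define s t where "s = (\<Sum>n\<in>I. w n)" and "t = (\<Sum>n\<in>A - I. w n)"
  define X where "X = (\<Sum>n\<in>I. w n * y n)"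
  have opposite: "(\<Sum>n\<in>A - I. w n * y n) = - X"
    using assms(4) split[of "\<lambda>n. w n * y n"] by (simp add: X_def)
  have "X\<^sup>2 \<le> s * (\<Sum>n\<in>I. w n * (y n)\<^sup>2)"
    unfolding X_def s_def using assms(2,3) by (intro weighted_Cauchy_Schwarz) auto
  moreover have "X\<^sup>2 \<le> t * (\<Sum>n\<in>A - I. w n * (y n)\<^sup>2)"
    using weighted_Cauchy_Schwarz[of "A - I" w y] assms(3) opposite by (simp add: t_def)
  moreover have "0 \<le> s" "0 \<le> t"
    unfolding s_def t_def using assms(2,3) by (auto intro: sum_nonneg)
  ultimately have "t * X\<^sup>2 + s * X\<^sup>2
      \<le> t * (s * (\<Sum>n\<in>I. w n * (y n)\<^sup>2)) + s * (t * (\<Sum>n\<in>A - I. w n * (y n)\<^sup>2))"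
    by (intro add_mono mult_left_mono)
  then show ?thesis
    unfolding split[of w] split[of "\<lambda>n. w n * (y n)\<^sup>2"] by (simp add: X_def s_def t_def algebra_simps)
qed

lemma sum_mult_inner_diff:
  "(\<Sum>n\<in>A. w n * (v \<bullet> (g n - m))) = v \<bullet> (\<Sum>n\<in>A. w n *\<^sub>R g n) - (\<Sum>n\<in>A. w n) * (v \<bullet> m)"
  by (simp add: inner_diff_right right_diff_distrib sum_subtractf inner_sum_right sum_distrib_right)

lemma inner_Smat_ge_variance:
  fixes g :: "nat \<Rightarrow> real^'p" and w :: "nat \<Rightarrow> real"
  assumes "(\<Sum>n\<in>{1..N}. w n) = 1"
  defines "m \<equiv> (\<Sum>n\<in>{1..N}. w n *\<^sub>R g n)"
  shows "(\<Sum>n\<in>{1..N}. w n * (v \<bullet> (g n - m))\<^sup>2) \<le> v \<bullet> (Smat N g w c *v v)"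
proof -
  define d where "d = v \<bullet> (m - c)"
  define z where "z n = v \<bullet> (g n - m)" for n
  have centered: "(\<Sum>n\<in>{1..N}. w n * z n) = 0"
    using assms(1) by (simp add: z_def sum_mult_inner_diff m_def)
  have "v \<bullet> (Smat N g w c *v v) = (\<Sum>n\<in>{1..N}. w n * (z n + d)\<^sup>2)"
    unfolding inner_Smat z_def d_def by (simp add: inner_diff_right)
  also have "\<dots> = (\<Sum>n\<in>{1..N}. w n * (z n)\<^sup>2 + 2 * d * (w n * z n) + d\<^sup>2 * w n)"
    by (intro sum.cong) (simp_all add: power2_eq_square algebra_simps)
  also have "\<dots> = (\<Sum>n\<in>{1..N}. w n * (z n)\<^sup>2) + d\<^sup>2"
    using centered assms(1) by (simp add: sum.distrib sum_distrib_left[symmetric])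
  finally show ?thesis by (simp add: z_def)
qed

lemma gamma_nonneg: "0 \<le> gamma N g w c"
  unfolding gamma_def op_norm_def by (rule onorm_pos_le) simp

lemma restricted_mean_deviation:
  assumes I: "I \<subseteq> {1..N}" and w: "\<And>n. n \<in> {1..N} \<Longrightarrow> 0 \<le> w n" "(\<Sum>n\<in>{1..N}. w n) = 1"
    and a: "a = (\<Sum>n\<in>{1..N} - I. w n)" "a < 1"
  shows "(norm ((1 / (1 - a)) *\<^sub>R (\<Sum>n\<in>I. w n *\<^sub>R g n) - (\<Sum>n\<in>{1..N}. w n *\<^sub>R g n)))\<^sup>2
    \<le> a / (1 - a) * gamma N g w c"
proof -
  define m where "m = (\<Sum>n\<in>{1..N}. w n *\<^sub>R g n)"
  define u where "u = (1 / (1 - a)) *\<^sub>R (\<Sum>n\<in>I. w n *\<^sub>R g n) - m"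
  define y where "y n = u \<bullet> (g n - m)" for n
  have mass_I: "(\<Sum>n\<in>I. w n) = 1 - a"
    using sum.subset_diff[OF I, of w] w(2) a(1) by simp
  have "0 \<le> a" unfolding a(1) using w(1) by (auto intro: sum_nonneg)
  have "(\<Sum>n\<in>{1..N}. w n * y n) = 0"
    using w(2) by (simp add: y_def sum_mult_inner_diff m_def)
  then have "(\<Sum>n\<in>I. w n * y n)\<^sup>2 \<le> (1 - a) * a * (\<Sum>n\<in>{1..N}. w n * (y n)\<^sup>2)"
    using centered_partial_sum_sq_le[of "{1..N}" I w y] I w a(1) mass_I by simp
  also have "\<dots> \<le> (1 - a) * a * (gamma N g w c * (norm u)\<^sup>2)"
  proof (rule mult_left_mono)
    show "(\<Sum>n\<in>{1..N}. w n * (y n)\<^sup>2) \<le> gamma N g w c * (norm u)\<^sup>2"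
      using inner_Smat_ge_variance[OF w(2), where g = g and v = u and c = c]
        inner_le_op_norm[of u "Smat N g w c"]
      by (simp add: y_def m_def gamma_def)
  qed (use a(2) \<open>0 \<le> a\<close> in simp)
  also have "(\<Sum>n\<in>I. w n * y n) = (1 - a) * (norm u)\<^sup>2"
  proof -
    have restricted: "(\<Sum>n\<in>I. w n *\<^sub>R g n) = (1 - a) *\<^sub>R (u + m)"
      using a(2) by (simp add: u_def)
    show ?thesis
      unfolding y_def sum_mult_inner_diff mass_I restricted
      by (simp add: power2_norm_eq_inner inner_add_right algebra_simps)
  qed
  finally have "((1 - a) * (norm u)\<^sup>2) * ((1 - a) * (norm u)\<^sup>2)
      \<le> ((1 - a) * (norm u)\<^sup>2) * (a * gamma N g w c)"
    by (simp add: power2_eq_square algebra_simps)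
  then have "(1 - a) * (norm u)\<^sup>2 \<le> a * gamma N g w c"
    using a(2) gamma_nonneg[of N g w c] \<open>0 \<le> a\<close>
    by (cases "u = 0") (auto simp: mult_le_cancel_left)
  then show ?thesis
    using a(2) by (simp add: u_def m_def field_simps)
qed

lemma capped_simplex_mass_le:
  assumes w: "w \<in> capped_simplex A e" and J: "J \<subseteq> A" and A: "finite A" and e: "e < 1"
  shows "(\<Sum>n\<in>J. w n) * ((1 - e) * real (card A)) \<le> real (card J)"
proof (cases "A = {}")
  case True
  then show ?thesis using J by simp
next
  case False
  then have pos: "0 < (1 - e) * real (card A)" using A e by (simp add: card_gt_0_iff)
  have "(\<Sum>n\<in>J. w n) \<le> (\<Sum>n\<in>J. 1 / ((1 - e) * real (card A)))"
    using w J unfolding capped_simplex_def by (intro sum_mono) auto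
  also have "\<dots> = real (card J) / ((1 - e) * real (card A))" by simp
  finally show ?thesis using pos by (simp add: pos_le_divide_eq)
qed

lemma partition_card:
  assumes "Iin \<union> Iout = {1..N}" "Iin \<inter> Iout = {}"
  shows "real (card Iin) + real (card Iout) = real N"
proof -
  have "finite Iin" "finite Iout" using assms(1) by (metis finite_Un finite_atLeastAtMost)+
  then show ?thesis using card_Un_disjoint[of Iin Iout] assms by (simp flip: of_nat_add)
qed

lemma uniform_weight_capped_simplex:
  assumes "finite A" "I \<subseteq> A" "I \<noteq> {}" "(1 - e) * real (card A) \<le> real (card I)"
    "0 < (1 - e) * real (card A)"
  shows "(\<lambda>n. if n \<in> I then 1 / real (card I) else 0) \<in> capped_simplex A e"
proof -
  have "finite I" using assms(1,2) by (rule finite_subset[rotated])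
  then have "0 < card I" using assms(3) by (simp add: card_gt_0_iff)
  then have "1 / real (card I) \<le> 1 / ((1 - e) * real (card A))"
    using assms(4,5) by (intro divide_left_mono) auto
  moreover have "(\<Sum>n\<in>A. if n \<in> I then 1 / real (card I) else 0) = 1"
    using assms(1,2) \<open>0 < card I\<close> by (simp add: sum.If_cases Int_absorb1)
  ultimately show ?thesis using assms(5) by (auto simp: capped_simplex_def)
qed

lemma renormalized_cap_le:
  fixes eps a x n_in n_out n :: real
  assumes eps: "0 \<le> eps" "eps < 1/2" and "a < 1" "0 < n_in"
    and counts: "n_in + n_out = n" "n_out \<le> eps * n"
    and outlier_mass: "a * ((1 - eps) * n) \<le> n_out"
    and x: "x \<le> 1 / ((1 - eps) * n)"
  shows "x / (1 - a) \<le> 1 / ((1 - eps / (1 - eps)) * n_in)"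
proof -
  have "(1 - 2 * eps) * n_in = (1 - eps)\<^sup>2 * n - (1 - eps) * n_out - (eps * (eps * n) - eps * n_out)"
    using counts(1) by (auto simp: power2_eq_square algebra_simps)
  also have "\<dots> \<le> (1 - eps)\<^sup>2 * n - (1 - eps) * n_out"
    using counts(2) eps by (simp add: mult_left_mono)
  also have "\<dots> \<le> (1 - eps)\<^sup>2 * n - (1 - eps) * (a * ((1 - eps) * n))"
    using outlier_mass eps by (simp add: mult_left_mono)
  also have "\<dots> = (1 - eps) * ((1 - eps) * n * (1 - a))"
    by (simp add: power2_eq_square algebra_simps)
  finally have key: "(1 - 2 * eps) * n_in \<le> (1 - eps) * ((1 - eps) * n * (1 - a))" .
  have "x / (1 - a) \<le> 1 / ((1 - eps) * n) / (1 - a)"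
    using x \<open>a < 1\<close> by (intro divide_right_mono) auto
  also have "\<dots> = (1 - eps) / ((1 - eps) * ((1 - eps) * n * (1 - a)))"
    using eps by simp
  also have "\<dots> \<le> (1 - eps) / ((1 - 2 * eps) * n_in)"
    using key \<open>0 < n_in\<close> eps by (intro frac_le) auto
  also have "\<dots> = 1 / ((1 - eps / (1 - eps)) * n_in)"
    using eps by (simp add: field_simps)
  finally show ?thesis .
qed

lemma capped_simplex_renormalize:
  assumes eps: "0 \<le> eps" "eps < 1/2"
    and part: "Iin \<union> Iout = {1..N}" "Iin \<inter> Iout = {}" "real (card Iout) \<le> eps * real N"
    and w: "w \<in> capped_simplex {1..N} eps"
  defines "a \<equiv> \<Sum>n\<in>Iout. w n"
  shows "a \<le> eps / (1 - eps)" and "a < 1"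
    and "(\<lambda>n. w n / (1 - a)) \<in> capped_simplex Iin (eps / (1 - eps))"
proof -
  have "N \<noteq> 0" using w by (cases N) (auto simp: capped_simplex_def)
  have outlier_mass: "a * ((1 - eps) * real N) \<le> real (card Iout)"
    unfolding a_def using capped_simplex_mass_le[OF w _ _, of Iout] part(1) eps by auto
  then have "a * (1 - eps) * real N \<le> eps * real N" using part(3) by (simp add: mult_ac)
  then have a_bound: "a * (1 - eps) \<le> eps" using \<open>N \<noteq> 0\<close> by simp
  then show "a \<le> eps / (1 - eps)" using eps by (simp add: pos_le_divide_eq)
  have "a * (1 - eps) < 1 * (1 - eps)" using a_bound eps by (simp add: algebra_simps)
  then show "a < 1" using eps by (simp only: mult_less_cancel_right)
  have w_nonneg: "0 \<le> w n" and w_le: "w n \<le> 1 / ((1 - eps) * real N)" if "n \<in> Iin" for n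
    using w that part(1) unfolding capped_simplex_def by auto
  have "(\<Sum>n\<in>{1..N}. w n) = (\<Sum>n\<in>Iin. w n) + a"
    unfolding a_def using part(1,2) by (metis finite_Un finite_atLeastAtMost sum.union_disjoint)
  then have mass_in: "(\<Sum>n\<in>Iin. w n) = 1 - a" using w by (simp add: capped_simplex_def)
  have "0 < (1 - eps) * real N" using eps \<open>N \<noteq> 0\<close> by simp
  also have "\<dots> \<le> real (card Iin)"
    using partition_card[OF part(1,2)] part(3) by (simp add: algebra_simps)
  finally have "0 < real (card Iin)" .
  then have "w n / (1 - a) \<le> 1 / ((1 - eps / (1 - eps)) * real (card Iin))" if "n \<in> Iin" for n
    using eps \<open>a < 1\<close> partition_card[OF part(1,2)] part(3) outlier_mass w_le[OF that]
    by (intro renormalized_cap_le) auto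
  moreover have "(\<Sum>n\<in>Iin. w n / (1 - a)) = 1"
    using mass_in \<open>a < 1\<close> by (simp add: sum_divide_distrib[symmetric])
  ultimately show "(\<lambda>n. w n / (1 - a)) \<in> capped_simplex Iin (eps / (1 - eps))"
    using w_nonneg \<open>a < 1\<close> by (auto simp: capped_simplex_def)
qed

lemma inlier_stable_weighted_mean_error:
  fixes g :: "nat \<Rightarrow> real^'p"
  assumes eps: "0 \<le> eps" "eps < 1/2"
    and stable: "inlier_stable N eps g mu Sig dmu dS"
    and w: "w \<in> capped_simplex {1..N} eps"
  shows "norm ((\<Sum>n\<in>{1..N}. w n *\<^sub>R g n) - mu)
    \<le> dmu + sqrt (eps / (1 - 2 * eps)) * sqrt (gamma N g w c)"
proof -
  obtain Iin Iout where part: "Iin \<union> Iout = {1..N}" "Iin \<inter> Iout = {}" "real (card Iout) \<le> eps * real N"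
    and inlier_mean: "\<And>v. v \<in> capped_simplex Iin (eps / (1 - eps))
      \<Longrightarrow> norm (\<Sum>n\<in>Iin. v n *\<^sub>R (g n - mu)) \<le> dmu"
    using stable unfolding inlier_stable_def by blast
  define a where "a = (\<Sum>n\<in>Iout. w n)"
  have a_le: "a \<le> eps / (1 - eps)" and "a < 1"
    and w_in: "(\<lambda>n. w n / (1 - a)) \<in> capped_simplex Iin (eps / (1 - eps))"
    using capped_simplex_renormalize[OF eps part w] by (simp_all add: a_def)
  define m_in where "m_in = (1 / (1 - a)) *\<^sub>R (\<Sum>n\<in>Iin. w n *\<^sub>R g n)"
  have "m_in - mu = (\<Sum>n\<in>Iin. (w n / (1 - a)) *\<^sub>R (g n - mu))"
    using w_in by (simp add: m_in_def capped_simplex_def scaleR_diff_right sum_subtractf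
        scaleR_sum_right scaleR_sum_left[symmetric])
  then have near_in: "norm (m_in - mu) \<le> dmu" using inlier_mean[OF w_in] by simp
  have Iout_eq: "{1..N} - Iin = Iout" using part(1,2) by blast
  have "(norm (m_in - (\<Sum>n\<in>{1..N}. w n *\<^sub>R g n)))\<^sup>2 \<le> a / (1 - a) * gamma N g w c"
    unfolding m_in_def
  proof (rule restricted_mean_deviation)
    show "Iin \<subseteq> {1..N}" using part(1) by blast
    show "a = (\<Sum>n\<in>{1..N} - Iin. w n)" by (simp only: Iout_eq a_def)
  qed (use w \<open>a < 1\<close> in \<open>auto simp: capped_simplex_def\<close>)
  also have "\<dots> \<le> eps / (1 - 2 * eps) * gamma N g w c"
  proof (rule mult_right_mono[OF _ gamma_nonneg])
    show "a / (1 - a) \<le> eps / (1 - 2 * eps)"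
      using a_le \<open>a < 1\<close> eps by (simp add: field_simps)
  qed
  finally have "norm (m_in - (\<Sum>n\<in>{1..N}. w n *\<^sub>R g n))
      \<le> sqrt (eps / (1 - 2 * eps) * gamma N g w c)"
    by (rule real_le_rsqrt)
  then have far: "norm (m_in - (\<Sum>n\<in>{1..N}. w n *\<^sub>R g n))
      \<le> sqrt (eps / (1 - 2 * eps)) * sqrt (gamma N g w c)"
    by (simp only: real_sqrt_mult)
  have "norm ((\<Sum>n\<in>{1..N}. w n *\<^sub>R g n) - mu)
      \<le> norm (m_in - mu) + norm (m_in - (\<Sum>n\<in>{1..N}. w n *\<^sub>R g n))"
    using norm_triangle_sub[of "(\<Sum>n\<in>{1..N}. w n *\<^sub>R g n) - mu" "m_in - mu"]
    by (simp add: norm_minus_commute)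
  then show ?thesis using near_in far by linarith
qed

lemma loewner_le_inner: "loewner_le A B \<Longrightarrow> v \<bullet> (A *v v) \<le> v \<bullet> (B *v v)"
  unfolding loewner_le_def psd_def by (simp add: matrix_vector_mult_diff_rdistrib inner_diff_right)

lemma inner_plus_scaled_identity_le: "v \<bullet> ((S + d *\<^sub>R mat 1) *v v) \<le> (op_norm S + d) * (norm v)\<^sup>2"
  using inner_le_op_norm[of v S]
  by (simp add: matrix_vector_mult_add_rdistrib scaleR_matrix_vector_assoc[symmetric] inner_add_right
      power2_norm_eq_inner algebra_simps)

lemma inner_second_moment_recenter_le:
  fixes g :: "nat \<Rightarrow> real^'p"
  assumes mass: "(\<Sum>n\<in>I. w n) = 1"
  shows "v \<bullet> ((\<Sum>n\<in>I. w n *\<^sub>R outer (g n - c) (g n - c)) *v v)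
    \<le> v \<bullet> ((\<Sum>n\<in>I. w n *\<^sub>R outer (g n - mu) (g n - mu)) *v v) + (v \<bullet> ((\<Sum>n\<in>I. w n *\<^sub>R g n) - c))\<^sup>2"
proof -
  define z where "z n = v \<bullet> (g n - mu)" for n
  define d where "d = v \<bullet> (mu - c)"
  define X where "X = (\<Sum>n\<in>I. w n * z n)"
  have "v \<bullet> ((\<Sum>n\<in>I. w n *\<^sub>R outer (g n - c) (g n - c)) *v v) = (\<Sum>n\<in>I. w n * (z n + d)\<^sup>2)"
    unfolding inner_sum_outer z_def d_def by (simp add: inner_commute inner_diff_right)
  also have "\<dots> = (\<Sum>n\<in>I. w n * (z n)\<^sup>2 + 2 * d * (w n * z n) + d\<^sup>2 * w n)"
    by (intro sum.cong) (simp_all add: power2_eq_square algebra_simps)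
  also have "\<dots> = (\<Sum>n\<in>I. w n * (z n)\<^sup>2) + 2 * d * X + d\<^sup>2"
    using mass by (simp add: X_def sum.distrib sum_distrib_left[symmetric])
  also have "\<dots> \<le> (\<Sum>n\<in>I. w n * (z n)\<^sup>2) + (X + d)\<^sup>2"
    using zero_le_square[of X] by (simp add: power2_eq_square algebra_simps)
  also have "(\<Sum>n\<in>I. w n * (z n)\<^sup>2) = v \<bullet> ((\<Sum>n\<in>I. w n *\<^sub>R outer (g n - mu) (g n - mu)) *v v)"
    unfolding inner_sum_outer z_def by (simp add: inner_commute)
  also have "X + d = v \<bullet> ((\<Sum>n\<in>I. w n *\<^sub>R g n) - c)"
    unfolding X_def z_def d_def sum_mult_inner_diff mass by (simp add: inner_diff_right)
  finally show ?thesis .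
qed

lemma inner_second_moment_le:
  fixes g :: "nat \<Rightarrow> real^'p"
  assumes mass: "(\<Sum>n\<in>I. w n) = 1"
    and mean: "norm (\<Sum>n\<in>I. w n *\<^sub>R (g n - mu)) \<le> dmu"
    and cov: "loewner_le (\<Sum>n\<in>I. w n *\<^sub>R outer (g n - mu) (g n - mu)) (Sig + dS *\<^sub>R mat 1)"
    and center: "norm (c - mu) \<le> R"
  shows "v \<bullet> ((\<Sum>n\<in>I. w n *\<^sub>R outer (g n - c) (g n - c)) *v v)
    \<le> (op_norm Sig + dS + (dmu + R)\<^sup>2) * (norm v)\<^sup>2"
proof -
  define x where "x = (\<Sum>n\<in>I. w n *\<^sub>R g n) - c"
  have "x = (\<Sum>n\<in>I. w n *\<^sub>R (g n - mu)) + (mu - c)"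
    using mass by (simp add: x_def scaleR_diff_right sum_subtractf scaleR_sum_left[symmetric])
  then have "norm x \<le> norm (\<Sum>n\<in>I. w n *\<^sub>R (g n - mu)) + norm (mu - c)"
    by (simp add: norm_triangle_ineq)
  also have "\<dots> \<le> dmu + R" using mean center by (simp add: norm_minus_commute)
  finally have "\<bar>v \<bullet> x\<bar> \<le> norm v * (dmu + R)"
    using Cauchy_Schwarz_ineq2[of v x] mult_left_mono[of "norm x" "dmu + R" "norm v"] by simp
  then have "(v \<bullet> x)\<^sup>2 \<le> (dmu + R)\<^sup>2 * (norm v)\<^sup>2"
    using power_mono[of "\<bar>v \<bullet> x\<bar>" "norm v * (dmu + R)" 2]
    by (simp add: power_mult_distrib mult.commute)
  moreover have "v \<bullet> ((\<Sum>n\<in>I. w n *\<^sub>R outer (g n - mu) (g n - mu)) *v v) \<le> v \<bullet> ((Sig + dS *\<^sub>R mat 1) *v v)"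
    by (rule loewner_le_inner[OF cov])
  moreover have "\<dots> \<le> (op_norm Sig + dS) * (norm v)\<^sup>2"
    by (rule inner_plus_scaled_identity_le)
  ultimately show ?thesis
    using inner_second_moment_recenter_le[OF mass, where v = v and c = c and g = g and mu = mu]
    by (simp add: x_def algebra_simps)
qed

lemma OPT_le_of_inlier_stable:
  fixes g :: "nat \<Rightarrow> real^'p"
  assumes eps: "0 \<le> eps" "eps < 1/2" and N: "1 \<le> N"
    and stable: "inlier_stable N eps g mu Sig dmu dS"
    and center: "norm (c - mu) \<le> R"
  shows "OPT N eps g c \<le> op_norm Sig + dS + (dmu + R)\<^sup>2"
proof -
  obtain Iin Iout where part: "Iin \<union> Iout = {1..N}" "Iin \<inter> Iout = {}" "real (card Iout) \<le> eps * real N"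
    and inliers: "\<And>v. v \<in> capped_simplex Iin (eps / (1 - eps)) \<Longrightarrow>
      norm (\<Sum>n\<in>Iin. v n *\<^sub>R (g n - mu)) \<le> dmu \<and>
      loewner_le (\<Sum>n\<in>Iin. v n *\<^sub>R outer (g n - mu) (g n - mu)) (Sig + dS *\<^sub>R mat 1)"
    using stable unfolding inlier_stable_def by blast
  define u where "u n = (if n \<in> Iin then 1 / real (card Iin) else 0)" for n
  have Iin: "Iin \<subseteq> {1..N}" "finite Iin" using part(1) by (auto intro: finite_subset)
  have "0 < (1 - eps) * real N" using eps N by simp
  moreover have many_inliers: "(1 - eps) * real N \<le> real (card Iin)"
    using partition_card[OF part(1,2)] part(3) by (simp add: algebra_simps)
  ultimately have "Iin \<noteq> {}" by auto
  have u_N: "u \<in> capped_simplex {1..N} eps"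
    unfolding u_def using Iin \<open>Iin \<noteq> {}\<close> many_inliers \<open>0 < (1 - eps) * real N\<close>
    by (intro uniform_weight_capped_simplex) auto
  have "0 < card Iin" using Iin(2) \<open>Iin \<noteq> {}\<close> by (simp add: card_gt_0_iff)
  then have u_in: "u \<in> capped_simplex Iin (eps / (1 - eps))"
    unfolding u_def using Iin \<open>Iin \<noteq> {}\<close> eps
    by (intro uniform_weight_capped_simplex) (auto simp: field_simps)
  have Smat_u: "Smat N g u c = (\<Sum>n\<in>Iin. u n *\<^sub>R outer (g n - c) (g n - c))"
    unfolding Smat_def using Iin(1) by (intro sum.mono_neutral_right) (auto simp: u_def)
  have "(\<Sum>n\<in>Iin. u n) = 1" using u_in by (simp add: capped_simplex_def)
  then have "v \<bullet> (Smat N g u c *v v) \<le> (op_norm Sig + dS + (dmu + R)\<^sup>2) * (norm v)\<^sup>2" for v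
    unfolding Smat_u using inliers[OF u_in] center by (intro inner_second_moment_le) auto
  then have "Sup ((\<lambda>\<rho>. trace (Smat N g u c ** \<rho>)) ` {\<rho>. psd \<rho> \<and> trace \<rho> = 1})
      \<le> op_norm Sig + dS + (dmu + R)\<^sup>2"
    by (rule Sup_trace_density_le)
  then show ?thesis using OPT_le_Sup_trace[OF u_N, of g c] by linarith
qed

theorem mainTheorem14:
  fixes eps zeta :: real and N L k T :: nat
    and Theta B0 :: "(real^'p) set" and c0 :: "real^'p" and r0 :: real
    and g :: "nat \<Rightarrow> real^'p \<Rightarrow> nat \<Rightarrow> real^'p"
    and mu_g :: "nat \<Rightarrow> real^'p \<Rightarrow> real^'p"
    and Sigma_g :: "nat \<Rightarrow> real^'p \<Rightarrow> real^'p^'p"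
    and d_mu d_Sigma :: "nat \<Rightarrow> real \<Rightarrow> real"
    and theta :: "real^'p" and w :: "nat \<Rightarrow> real" and mu_hat :: "real^'p"
    and C_stop R d_T :: "nat \<Rightarrow> real"
  assumes eps: "0 \<le> eps" "eps < 1/3" and zeta: "0 < zeta" "zeta < 1"
    and N: "1 \<le> N"
    and B0: "B0 = ball c0 r0" "B0 \<subseteq> Theta"
    and theta: "theta \<in> B0" and k: "k \<in> {1..L}"
    and Sigma_psd: "\<forall>\<theta>'\<in>B0. psd (Sigma_g k \<theta>')"
    and Sigma_bdd: "bdd_above ((\<lambda>\<theta>'. op_norm (Sigma_g k \<theta>')) ` B0)"
    and stable: "inlier_stable N eps (g k theta) (mu_g k theta) (Sigma_g k theta)
                   (d_mu k zeta) (d_Sigma k zeta)"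
    and w: "w \<in> capped_simplex {1..N} eps"
  shows
   "(gamma N (g k theta) w mu_hat \<le> C_stop k \<longrightarrow>
       norm ((\<Sum>n\<in>{1..N}. w n *\<^sub>R g k theta n) - mu_g k theta)
         \<le> d_mu k zeta + sqrt (eps / (1 - 2 * eps)) * sqrt (C_stop k))
    \<and>
    ((gamma N (g k theta) w mu_hat \<le> OPT N eps (g k theta) mu_hat + d_T k
      \<and> norm (mu_hat - mu_g k theta) \<le> R k
      \<and> 0 < T
      \<and> d_T k \<le> 4 * Max {(norm (g k theta i - g k theta j))\<^sup>2 | i j. i \<in> {1..N} \<and> j \<in> {1..N}}
                   * (sqrt (ln (real CARD('p)) / real T) + sqrt (ln (1 / (1 - eps)) / real T)))
     \<longrightarrow>
       norm ((\<Sum>n\<in>{1..N}. w n *\<^sub>R g k theta n) - mu_g k theta)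
         \<le> d_mu k zeta + sqrt (eps / (1 - 2 * eps))
             * sqrt ((SUP \<theta>'\<in>B0. op_norm (Sigma_g k \<theta>')) + d_Sigma k zeta
                     + (d_mu k zeta + R k)\<^sup>2 + d_T k))"
proof -
  have eps': "0 \<le> eps" "eps < 1/2" using eps by auto
  have error: "norm ((\<Sum>n\<in>{1..N}. w n *\<^sub>R g k theta n) - mu_g k theta)
      \<le> d_mu k zeta + sqrt (eps / (1 - 2 * eps)) * sqrt C"
    if "gamma N (g k theta) w mu_hat \<le> C" for C
  proof -
    have "sqrt (eps / (1 - 2 * eps)) * sqrt (gamma N (g k theta) w mu_hat)
        \<le> sqrt (eps / (1 - 2 * eps)) * sqrt C"
      using that eps' by (intro mult_left_mono) auto
    then show ?thesis using inlier_stable_weighted_mean_error[OF eps' stable w, of mu_hat] by linarith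
  qed
  have OPT_bound: "OPT N eps (g k theta) mu_hat
      \<le> op_norm (Sigma_g k theta) + d_Sigma k zeta + (d_mu k zeta + R k)\<^sup>2"
    if "norm (mu_hat - mu_g k theta) \<le> R k"
    using OPT_le_of_inlier_stable[OF eps' N stable that] .
  show ?thesis
    using cSUP_upper[OF theta Sigma_bdd] by (intro conjI impI error) (auto dest!: OPT_bound)
qed

end
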